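(* Let $Q\subset V$ be a polytope and let $\mathscr V$ be the vertex set of some deformation of $Q$. Let $\mathrm{Def}(Q)|_{\mathscr V}=\{Q'\in\mathrm{Def}(Q): Q'\subseteq Q,\ \mathrm{Vert}(Q')\subseteq\mathscr V\}$, let $\min(\Sigma_Q^\vee)$ be the set of tangent cones of $Q$ at its vertices, let $X_{\mathscr V}=\{C+v: C\in\min(\Sigma_Q^\vee), v\in\mathscr V\}$, and define $\mathcal F_{\mathscr V}:\mathbb I(\mathrm{Def}(Q)|_{\mathscr V})\to\mathbb Z^{X_{\mathscr V}}$ by $\mathbf 1_P\mapsto\sum_{C+v\in X_{\mathscr V},\ C+v\text{ tightly contains }P}\mathbf e_{C+v}$. Then there is an injective $\mathbb Z$-linear map $\mathcal E_{\mathscr V}:\mathbb Z^{X_{\mathscr V}}\to\mathbb Z^{\oplus\mathrm{tran}(\Sigma_Q^\vee)}$ such that $\mathcal E_{\mathscr V}\circ\mathcal F_{\mathscr V}=\mathcal F\circ\iota$, where $\iota:\mathbb I(\mathrm{Def}(Q)|_{\mathscr V})\hookrightarrow\mathbb I(\mathrm{Def}^+(Q))$ is the inclusion and $\mathcal F:\mathbb I(\mathrm{Def}^+(Q))\to\mathbb Z^{\oplus\mathrm{tran}(\Sigma_Q^\vee)}$ is the map $\mathbf 1_P\mapsto\sum_{C+v\in\mathrm{tran}(\Sigma_Q^\vee),\ C+v\text{ tightly contains }P}\mathbf e_{C+v}$.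
   Context: $V$ is a finite-dimensional real vector space. $\mathbb I(\mathscr P)$ is the $\mathbb Z$-span in $\mathbb Z^V$ of indicator functions $\mathbf 1_P$, $P\in\mathscr P$. For a polyhedron $Q$, $\Sigma_Q$ is its outer normal fan; the tangent cone at a face $F$ is $C_F=\mathrm{Cone}(v'-v\mid v\in F,v'\in Q)$; $\Sigma_Q^\vee$ is the set of tangent cones and $\mathrm{tran}(\Sigma_Q^\vee)=\{C+v:C\in\Sigma_Q^\vee,v\in V\}$. $P$ is an extended deformation of $Q$ if each cone of $\Sigma_P$ is a union of cones of $\Sigma_Q$ ($\mathrm{Def}^+(Q)$ = set of these), and a deformation if moreover $\Sigma_P$ and $\Sigma_Q$ have the same support ($\mathrm{Def}(Q)$ = set of these). $C+v$ tightly contains $P$ if $P\subseteq C+v$ and $P\cap(\mathrm{lineal}(C)+v)\ne\emptyset$. $\mathbb Z^{X}$ has basis $\{\mathbf e_x\}$. *)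

theory Defs
  imports "HOL-Analysis.Analysis"
begin

definition normal_cone :: "'a::euclidean_space set \<Rightarrow> 'a set \<Rightarrow> 'a set" where
  "normal_cone P F = {u. \<forall>x\<in>F. \<forall>y\<in>P. u \<bullet> y \<le> u \<bullet> x}"

definition normal_fan :: "'a::euclidean_space set \<Rightarrow> 'a set set" where
  "normal_fan P = {normal_cone P F | F. F face_of P \<and> F \<noteq> {}}"

definition tangent_cone :: "'a::euclidean_space set \<Rightarrow> 'a set \<Rightarrow> 'a set" where
  "tangent_cone Q F = convex_cone hull {v' - v | v v'. v \<in> F \<and> v' \<in> Q}"

definition dual_fan :: "'a::euclidean_space set \<Rightarrow> 'a set set" where
  "dual_fan Q = {tangent_cone Q F | F. F face_of Q \<and> F \<noteq> {}}"

definition min_dual_fan :: "'a::euclidean_space set \<Rightarrow> 'a set set" where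
  "min_dual_fan Q = {tangent_cone Q {v} | v. v extreme_point_of Q}"

definition tran_dual_fan :: "'a::euclidean_space set \<Rightarrow> 'a set set" where
  "tran_dual_fan Q = {(\<lambda>x. x + v) ` C | C v. C \<in> dual_fan Q}"

definition lineal :: "'a::real_vector set \<Rightarrow> 'a set" where
  "lineal C = C \<inter> uminus ` C"

definition tightly_contains :: "'a::real_vector set \<Rightarrow> 'a \<Rightarrow> 'a set \<Rightarrow> bool" where
  "tightly_contains C v P \<longleftrightarrow>
     P \<subseteq> (\<lambda>x. x + v) ` C \<and> P \<inter> (\<lambda>x. x + v) ` lineal C \<noteq> {}"

definition ext_deformations :: "'a::euclidean_space set \<Rightarrow> 'a set set" where
  "ext_deformations Q = {P. polyhedron P \<and> P \<noteq> {} \<and>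
      (\<forall>N \<in> normal_fan P. \<exists>S \<subseteq> normal_fan Q. N = \<Union>S)}"

definition deformations :: "'a::euclidean_space set \<Rightarrow> 'a set set" where
  "deformations Q = {P \<in> ext_deformations Q. \<Union>(normal_fan P) = \<Union>(normal_fan Q)}"

definition vertices :: "'a::real_vector set \<Rightarrow> 'a set" where
  "vertices P = {x. x extreme_point_of P}"

definition deformations_restr :: "'a::euclidean_space set \<Rightarrow> 'a set \<Rightarrow> 'a set set" where
  "deformations_restr Q W = {Q' \<in> deformations Q. Q' \<subseteq> Q \<and> vertices Q' \<subseteq> W}"

definition X_set :: "'a::euclidean_space set \<Rightarrow> 'a set \<Rightarrow> 'a set set" where
  "X_set Q W = {(\<lambda>x. x + v) ` C | C v. C \<in> min_dual_fan Q \<and> v \<in> W}"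

text \<open>The translate S (= C + v, C a tangent cone of Q) tightly contains P; independent of the
  chosen presentation S = C + v.\<close>
definition tight_translate :: "'a::euclidean_space set \<Rightarrow> 'a set \<Rightarrow> 'a set \<Rightarrow> bool" where
  "tight_translate Q S P \<longleftrightarrow>
     (\<exists>C v. C \<in> dual_fan Q \<and> S = (\<lambda>x. x + v) ` C \<and> tightly_contains C v P)"

text \<open>Images of the generators 1_P under F_W (into Z^X) and under F (into Z^(+)tran),
  as integer-valued functions on sets (basis vector e_S = indicator of the point S).\<close>
definition FW_gen :: "'a::euclidean_space set \<Rightarrow> 'a set \<Rightarrow> 'a set \<Rightarrow> 'a set \<Rightarrow> int" where
  "FW_gen Q W P = (\<lambda>S. if S \<in> X_set Q W \<and> tight_translate Q S P then 1 else 0)"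

definition F_gen :: "'a::euclidean_space set \<Rightarrow> 'a set \<Rightarrow> 'a set \<Rightarrow> int" where
  "F_gen Q P = (\<lambda>S. if S \<in> tran_dual_fan Q \<and> tight_translate Q S P then 1 else 0)"

text \<open>Z^X as integer functions on sets vanishing off X; Z^(+)T as finitely supported ones vanishing off T.\<close>
definition int_funs_on :: "'b set \<Rightarrow> ('b \<Rightarrow> int) set" where
  "int_funs_on X = {f. \<forall>S. S \<notin> X \<longrightarrow> f S = 0}"

definition int_fin_funs_on :: "'b set \<Rightarrow> ('b \<Rightarrow> int) set" where
  "int_fin_funs_on T = {g. finite {S. g S \<noteq> 0} \<and> (\<forall>S. S \<notin> T \<longrightarrow> g S = 0)}"

end

theory Submission
  imports Defs
begin

text \<open>Fix, for every tangent cone \<open>C\<close> of \<open>Q\<close>, a vertex \<open>v\<^sub>C\<close> of the face at which it is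
  taken, so that the vertex cone \<open>C\<^bsub>v\<^sub>C\<^esub>\<close> lies in \<open>C\<close>. The embedding sends \<open>e\<^bsub>C\<^sub>v + p\<^esub>\<close>
  to the sum of the \<open>e\<^bsub>C + p\<^esub>\<close> over all tangent cones \<open>C\<close> with \<open>v\<^sub>C = v\<close>. Vertex cones
  are pointed, so a translate \<open>C\<^sub>v + p\<close> determines \<open>p\<close>; hence the coordinate of the image at a
  point of \<open>X\<close> is the original coordinate, and the embedding is injective.

  For a deformation \<open>P\<close> of \<open>Q\<close> and a vertex \<open>v\<close> of \<open>Q\<close>, the normal cone of \<open>Q\<close> at \<open>v\<close> lies
  in a normal cone of \<open>P\<close> at some face; by separation any point \<open>p\<close> of that face satisfies
  \<open>P \<subseteq> C\<^sub>v + p\<close>. Such a \<open>p\<close> is unique and a vertex of \<open>P\<close>. A translate \<open>C + a\<close> then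
  tightly contains \<open>P\<close> iff \<open>C + a = C + p\<close> for the point \<open>p\<close> belonging to \<open>v\<^sub>C\<close>, i.e. iff
  exactly one of the summands of the image of \<open>F\<^sub>V(1\<^sub>P)\<close> at \<open>C + a\<close> is \<open>1\<close>.\<close>

lemma convex_cone_tangent_cone: "convex_cone (tangent_cone Q F)"
  unfolding tangent_cone_def by (simp add: convex_cone_convex_cone_hull)

lemma convex_cone_dual_fan: "C \<in> dual_fan Q \<Longrightarrow> convex_cone C"
  unfolding dual_fan_def using convex_cone_tangent_cone by blast

lemma lineal_iff: "d \<in> lineal C \<longleftrightarrow> d \<in> C \<and> - d \<in> C"
  unfolding lineal_def by (force simp: image_iff)

lemma translate_convex_cone_eq_iff:
  fixes C C' :: "'a::real_vector set"
  assumes C: "convex_cone C" and C': "convex_cone C'"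
  shows "(\<lambda>x. x + d) ` C = C' \<longleftrightarrow> C' = C \<and> d \<in> lineal C"
proof
  assume eq: "(\<lambda>x. x + d) ` C = C'"
  have "d \<in> C'" using convex_cone_contains_0[OF C] eq by force
  have "0 \<in> C'" using convex_cone_contains_0[OF C'] .
  then obtain c where "c \<in> C" "0 = c + d" using eq by blast
  then have md: "- d \<in> C" by (metis add.commute add_eq_0_iff)
  have "2 *\<^sub>R d \<in> C'" using convex_cone_scaleR[OF C' _ \<open>d \<in> C'\<close>] by simp
  then obtain c where "c \<in> C" "2 *\<^sub>R d = c + d" using eq by blast
  then have d: "d \<in> C" by (simp add: scaleR_2)
  have "C' \<subseteq> C" using eq convex_cone_add[OF C _ d] by blast
  moreover have "C \<subseteq> C'"
  proof
    fix c assume "c \<in> C"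
    then have "c + - d \<in> C" using convex_cone_add[OF C _ md] by blast
    then show "c \<in> C'" using eq by force
  qed
  ultimately show "C' = C \<and> d \<in> lineal C" using d md lineal_iff by blast
next
  assume "C' = C \<and> d \<in> lineal C"
  then have C'C: "C' = C" and d: "d \<in> C" "- d \<in> C" using lineal_iff by auto
  have "(\<lambda>x. x + d) ` C \<subseteq> C" using convex_cone_add[OF C _ d(1)] by blast
  moreover have "C \<subseteq> (\<lambda>x. x + d) ` C"
  proof
    fix c assume "c \<in> C"
    then have "c + - d \<in> C" using convex_cone_add[OF C _ d(2)] by blast
    then show "c \<in> (\<lambda>x. x + d) ` C" by force
  qed
  ultimately show "(\<lambda>x. x + d) ` C = C'" using C'C by blast
qed

lemma translates_convex_cone_eq_iff:
  fixes C C' :: "'a::real_vector set"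
  assumes "convex_cone C" and "convex_cone C'"
  shows "(\<lambda>x. x + a) ` C = (\<lambda>x. x + b) ` C' \<longleftrightarrow> C' = C \<and> a - b \<in> lineal C"
proof -
  have "(\<lambda>x. x + a) ` C = (\<lambda>x. x + b) ` ((\<lambda>x. x + (a - b)) ` C)"
    by (simp add: image_image algebra_simps)
  moreover have "inj (\<lambda>x::'a. x + b)" by (simp add: inj_on_def)
  ultimately have "(\<lambda>x. x + a) ` C = (\<lambda>x. x + b) ` C' \<longleftrightarrow> (\<lambda>x. x + (a - b)) ` C = C'"
    by (simp add: inj_image_eq_iff)
  then show ?thesis using translate_convex_cone_eq_iff[OF assms] by simp
qed

lemma closed_convex_cone_separation:
  fixes C :: "'a::euclidean_space set"
  assumes C: "convex_cone C" and cl: "closed C" and z: "z \<notin> C"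
  shows "\<exists>u. (\<forall>c\<in>C. u \<bullet> c \<le> 0) \<and> u \<bullet> z > 0"
proof -
  have "convex C" using C by (simp add: convex_cone_def)
  then obtain a b where ab: "a \<bullet> z < b" "\<forall>x\<in>C. a \<bullet> x > b"
    using separating_hyperplane_closed_point[OF _ cl z] by blast
  have b: "b < 0" using ab convex_cone_contains_0[OF C] by force
  have "a \<bullet> c \<ge> 0" if c: "c \<in> C" for c
  proof (rule ccontr)
    assume neg: "\<not> 0 \<le> a \<bullet> c"
    define t where "t = b / (a \<bullet> c) + 1"
    have "b / (a \<bullet> c) > 0" using neg b by (simp add: divide_neg_neg)
    then have "t *\<^sub>R c \<in> C" using convex_cone_scaleR[OF C _ c] unfolding t_def by simp
    then have "a \<bullet> (t *\<^sub>R c) > b" using ab by blast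
    moreover have "a \<bullet> (t *\<^sub>R c) = b + a \<bullet> c" using neg unfolding t_def
      by (simp add: algebra_simps)
    ultimately show False using neg by simp
  qed
  then show ?thesis using ab b by (intro exI[of _ "-a"]) auto
qed

lemma polytope_vertex_strictly_exposed:
  fixes Q :: "'a::euclidean_space set"
  assumes "polytope Q" "v extreme_point_of Q"
  shows "\<exists>N. \<forall>q\<in>Q. q \<noteq> v \<longrightarrow> N \<bullet> q < N \<bullet> v"
proof -
  have "{v} exposed_face_of Q"
    using assms exposed_face_of_polyhedron polytope_imp_polyhedron face_of_singleton by blast
  then obtain a b where ab: "Q \<subseteq> {x. a \<bullet> x \<le> b}" "{v} = Q \<inter> {x. a \<bullet> x = b}"
    unfolding exposed_face_of_def by blast
  have "a \<bullet> v = b" using ab(2) by blast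
  moreover have "a \<bullet> q < b" if "q \<in> Q" "q \<noteq> v" for q
  proof -
    have "a \<bullet> q \<le> b" "a \<bullet> q \<noteq> b" using ab that by auto
    then show ?thesis by simp
  qed
  ultimately show ?thesis by auto
qed

lemma tangent_cone_vertex_subset:
  assumes N: "\<forall>q\<in>Q. q \<noteq> v \<longrightarrow> N \<bullet> q < N \<bullet> v"
  shows "tangent_cone Q {v} \<subseteq> {c. c = 0 \<or> N \<bullet> c < 0}"
  unfolding tangent_cone_def
proof (rule hull_minimal)
  show "{v' - x |x v'. x \<in> {v} \<and> v' \<in> Q} \<subseteq> {c. c = 0 \<or> N \<bullet> c < 0}"
    using N by (auto simp: inner_diff_right)
  show "convex_cone {c. c = 0 \<or> N \<bullet> c < 0}"
    unfolding convex_cone_iff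
  proof (intro conjI ballI allI impI)
    fix x y assume "x \<in> {c. c = 0 \<or> N \<bullet> c < 0}" "y \<in> {c. c = 0 \<or> N \<bullet> c < 0}"
    then show "x + y \<in> {c. c = 0 \<or> N \<bullet> c < 0}" by (auto simp: inner_add_right)
  next
    fix x and c :: real assume "x \<in> {c. c = 0 \<or> N \<bullet> c < 0}" "0 \<le> c"
    then show "c *\<^sub>R x \<in> {c. c = 0 \<or> N \<bullet> c < 0}"
      by (cases "c = 0") (auto simp: mult_pos_neg)
  qed simp
qed

lemma lineal_tangent_cone_vertex:
  fixes Q :: "'a::euclidean_space set"
  assumes "polytope Q" "v extreme_point_of Q"
  shows "lineal (tangent_cone Q {v}) = {0}"
proof -
  obtain N where N: "\<forall>q\<in>Q. q \<noteq> v \<longrightarrow> N \<bullet> q < N \<bullet> v"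
    using polytope_vertex_strictly_exposed assms by blast
  have "c = 0" if "c \<in> tangent_cone Q {v}" "- c \<in> tangent_cone Q {v}" for c
  proof -
    have "c = 0 \<or> N \<bullet> c < 0" "- c = 0 \<or> N \<bullet> (- c) < 0"
      using tangent_cone_vertex_subset[OF N] that by blast+
    then show ?thesis by (auto simp: inner_minus_right)
  qed
  then show ?thesis
    using convex_cone_contains_0[OF convex_cone_tangent_cone] by (auto simp: lineal_iff)
qed

lemma closed_tangent_cone_vertex:
  fixes Q :: "'a::euclidean_space set"
  assumes "polytope Q"
  shows "closed (tangent_cone Q {v})"
proof -
  have "{v' - x |x v'. x \<in> {v} \<and> v' \<in> Q} = (+) (- v) ` Q" by auto
  moreover have "polytope ((+) (- v) ` Q)" using assms polytope_translation_eq by blast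
  ultimately show ?thesis unfolding tangent_cone_def
    using polyhedron_convex_cone_hull_polytope polyhedron_imp_closed by metis
qed

lemma tangent_cone_vertex_subset_face:
  "v \<in> G \<Longrightarrow> tangent_cone Q {v} \<subseteq> tangent_cone Q G"
  unfolding tangent_cone_def by (rule hull_mono) auto

lemma diff_in_tangent_cone: "q \<in> Q \<Longrightarrow> x \<in> G \<Longrightarrow> q - x \<in> tangent_cone Q G"
  unfolding tangent_cone_def by (rule hull_inc) auto

lemma tangent_cone_vertex_in_dual_fan:
  "v extreme_point_of Q \<Longrightarrow> tangent_cone Q {v} \<in> dual_fan Q"
  unfolding dual_fan_def using face_of_singleton by blast

lemma translate_eq_translate_vertex_cone_iff:
  fixes Q :: "'a::euclidean_space set"
  assumes "polytope Q" "v extreme_point_of Q" "convex_cone C"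
  shows "(\<lambda>x. x + a) ` C = (\<lambda>x. x + b) ` tangent_cone Q {v} \<longleftrightarrow>
    C = tangent_cone Q {v} \<and> a = b"
proof
  assume "(\<lambda>x. x + a) ` C = (\<lambda>x. x + b) ` tangent_cone Q {v}"
  then have "tangent_cone Q {v} = C" "a - b \<in> lineal C"
    using translates_convex_cone_eq_iff[OF assms(3) convex_cone_tangent_cone] by blast+
  then have "C = tangent_cone Q {v}" "a - b \<in> {0}"
    using lineal_tangent_cone_vertex[OF assms(1,2)] by simp_all
  then show "C = tangent_cone Q {v} \<and> a = b" by simp
qed simp

lemma subset_translate_iff:
  fixes C :: "'a::ab_group_add set"
  shows "P \<subseteq> (\<lambda>x. x + p) ` C \<longleftrightarrow> (\<forall>y\<in>P. y - p \<in> C)"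
proof -
  have "y \<in> (\<lambda>x. x + p) ` C \<longleftrightarrow> y - p \<in> C" for y
  proof
    assume "y - p \<in> C"
    then show "y \<in> (\<lambda>x. x + p) ` C" by (rule image_eqI[rotated]) simp
  qed auto
  then show ?thesis by blast
qed

lemma deformation_normal_cone_vertex:
  fixes Q :: "'a::euclidean_space set"
  assumes Q: "polytope Q" and P: "P \<in> deformations Q" and v: "v extreme_point_of Q"
  shows "\<exists>H. H face_of P \<and> H \<noteq> {} \<and> normal_cone Q {v} \<subseteq> normal_cone P H"
proof -
  text \<open>A normal vector \<open>N\<close> exposing \<open>v\<close> lies in no normal cone of \<open>Q\<close> except the one at \<open>v\<close>;
    the normal cone of \<open>P\<close> containing \<open>N\<close> is a union of normal cones of \<open>Q\<close>, so it contains
    that one.\<close>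
  obtain N where N: "\<forall>q\<in>Q. q \<noteq> v \<longrightarrow> N \<bullet> q < N \<bullet> v"
    using polytope_vertex_strictly_exposed Q v by blast
  have vQ: "v \<in> Q" using v extreme_point_of_def by blast
  have "N \<in> normal_cone Q {v}"
    unfolding normal_cone_def using N by (force intro: less_imp_le)
  moreover have "normal_cone Q {v} \<in> normal_fan Q"
    unfolding normal_fan_def using v face_of_singleton by blast
  ultimately have "N \<in> \<Union>(normal_fan P)" using P unfolding deformations_def by blast
  then obtain H where H: "H face_of P" "H \<noteq> {}" "N \<in> normal_cone P H"
    unfolding normal_fan_def by blast
  have "normal_cone P H \<in> normal_fan P" unfolding normal_fan_def using H by blast
  moreover have "\<forall>N \<in> normal_fan P. \<exists>S \<subseteq> normal_fan Q. N = \<Union>S"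
    using P by (simp add: deformations_def ext_deformations_def)
  ultimately obtain S where S: "S \<subseteq> normal_fan Q" "normal_cone P H = \<Union>S"
    by blast
  then obtain s where s: "s \<in> S" "N \<in> s" using H(3) by blast
  then obtain F where F: "F face_of Q" "F \<noteq> {}" "s = normal_cone Q F"
    using S(1) unfolding normal_fan_def by blast
  have "F \<subseteq> {v}"
  proof
    fix x assume x: "x \<in> F"
    then have "x \<in> Q" using F(1) face_of_imp_subset by blast
    moreover have "N \<bullet> v \<le> N \<bullet> x" using s(2) F(3) x vQ unfolding normal_cone_def by blast
    ultimately show "x \<in> {v}" using N not_less by blast
  qed
  then have "F = {v}" using F(2) by blast
  then show ?thesis using H(1,2) S(2) s(1) F(3) by blast
qed

lemma normal_cone_subset_imp_subset_translate_tangent_cone: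
  fixes Q :: "'a::euclidean_space set"
  assumes Q: "polytope Q" and sub: "normal_cone Q {v} \<subseteq> normal_cone P H" and p: "p \<in> H"
  shows "\<forall>y\<in>P. y - p \<in> tangent_cone Q {v}"
proof (rule ballI, rule ccontr)
  fix y assume y: "y \<in> P" and notin: "y - p \<notin> tangent_cone Q {v}"
  obtain u where u: "\<forall>c\<in>tangent_cone Q {v}. u \<bullet> c \<le> 0" "u \<bullet> (y - p) > 0"
    using closed_convex_cone_separation[OF convex_cone_tangent_cone
        closed_tangent_cone_vertex[OF Q] notin] by blast
  have "u \<in> normal_cone Q {v}" unfolding normal_cone_def
  proof (intro CollectI ballI)
    fix x q assume "x \<in> {v}" "q \<in> Q"
    then have "u \<bullet> (q - x) \<le> 0" using u(1) diff_in_tangent_cone by blast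
    then show "u \<bullet> q \<le> u \<bullet> x" by (simp add: inner_diff_right)
  qed
  then have "u \<bullet> y \<le> u \<bullet> p" using sub y p unfolding normal_cone_def by blast
  then show False using u(2) by (simp add: inner_diff_right)
qed

lemma deformation_apex:
  fixes Q :: "'a::euclidean_space set"
  assumes "polytope Q" "P \<in> deformations Q" "v extreme_point_of Q"
  shows "\<exists>p\<in>P. \<forall>y\<in>P. y - p \<in> tangent_cone Q {v}"
proof -
  obtain H where H: "H face_of P" "H \<noteq> {}" "normal_cone Q {v} \<subseteq> normal_cone P H"
    using deformation_normal_cone_vertex[OF assms] by blast
  then obtain p where "p \<in> H" by blast
  then show ?thesis
    using normal_cone_subset_imp_subset_translate_tangent_cone[OF assms(1) H(3)]
      H(1) face_of_imp_subset by blast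
qed

lemma apex_extreme_point:
  fixes Q :: "'a::euclidean_space set"
  assumes Q: "polytope Q" and v: "v extreme_point_of Q" and cP: "convex P"
    and p: "p \<in> P" and apex: "\<forall>y\<in>P. y - p \<in> tangent_cone Q {v}"
  shows "p extreme_point_of P"
proof -
  obtain N where N: "\<forall>q\<in>Q. q \<noteq> v \<longrightarrow> N \<bullet> q < N \<bullet> v"
    using polytope_vertex_strictly_exposed Q v by blast
  have lt: "N \<bullet> y < N \<bullet> p" if "y \<in> P" "y \<noteq> p" for y
  proof -
    have "y - p = 0 \<or> N \<bullet> (y - p) < 0"
      using tangent_cone_vertex_subset[OF N] apex that(1) by blast
    then show ?thesis using that(2) by (auto simp: inner_diff_right)
  qed
  then have "N \<bullet> y \<le> N \<bullet> p" if "y \<in> P" for y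
    using that by (cases "y = p") (auto intro: less_imp_le)
  then have "P \<inter> {x. N \<bullet> x = N \<bullet> p} face_of P"
    using face_of_Int_supporting_hyperplane_le[OF cP] by blast
  moreover have "P \<inter> {x. N \<bullet> x = N \<bullet> p} = {p}" using lt p by force
  ultimately show ?thesis by (simp add: face_of_singleton)
qed

lemma apex_unique:
  fixes Q :: "'a::euclidean_space set"
  assumes "polytope Q" "v extreme_point_of Q" and "p \<in> P" "p' \<in> P"
    and "\<forall>y\<in>P. y - p \<in> tangent_cone Q {v}" "\<forall>y\<in>P. y - p' \<in> tangent_cone Q {v}"
  shows "p = p'"
proof -
  have "p - p' \<in> tangent_cone Q {v}" "p' - p \<in> tangent_cone Q {v}"
    using assms(3-6) by blast+
  then have "p - p' \<in> tangent_cone Q {v}" "- (p - p') \<in> tangent_cone Q {v}" by simp_all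
  then have "p - p' \<in> lineal (tangent_cone Q {v})" using lineal_iff by blast
  then show ?thesis using lineal_tangent_cone_vertex[OF assms(1,2)] by simp
qed

lemma tightly_contains_if_apex:
  assumes "convex_cone C" and "p \<in> P" and "\<forall>y\<in>P. y - p \<in> C"
  shows "tightly_contains C p P"
proof -
  have "p \<in> (\<lambda>x. x + p) ` lineal C"
    using convex_cone_contains_0[OF assms(1)] lineal_iff by force
  then show ?thesis using assms(2,3) unfolding tightly_contains_def subset_translate_iff by blast
qed

lemma tightly_contains_pointed_iff:
  assumes "lineal C = {0}"
  shows "tightly_contains C p P \<longleftrightarrow> p \<in> P \<and> (\<forall>y\<in>P. y - p \<in> C)"
  using assms unfolding tightly_contains_def subset_translate_iff by auto

lemma tightly_contains_translate_eq:
  fixes C :: "'a::real_vector set"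
  assumes C: "convex_cone C" and tight: "tightly_contains C w P"
    and p: "p \<in> P" and apex: "\<forall>y\<in>P. y - p \<in> C"
  shows "(\<lambda>x. x + w) ` C = (\<lambda>x. x + p) ` C"
proof -
  have "\<forall>y\<in>P. y - w \<in> C" and "P \<inter> (\<lambda>x. x + w) ` lineal C \<noteq> {}"
    using tight unfolding tightly_contains_def subset_translate_iff by auto
  then obtain l where l: "l + w \<in> P" "l \<in> C" "- l \<in> C" using lineal_iff by blast
  have "p - w \<in> C" using \<open>\<forall>y\<in>P. y - w \<in> C\<close> p by blast
  moreover have "(l + w - p) + - l \<in> C" using convex_cone_add[OF C _ l(3)] apex l(1) by blast
  then have "- (p - w) \<in> C" by (simp add: algebra_simps)
  ultimately have "w - p \<in> lineal C" using lineal_iff by fastforce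
  then show ?thesis using translates_convex_cone_eq_iff[OF C C] by blast
qed

lemma tight_translate_vertex_cone_iff:
  fixes Q :: "'a::euclidean_space set"
  assumes Q: "polytope Q" and v: "v extreme_point_of Q"
  shows "tight_translate Q ((\<lambda>x. x + p) ` tangent_cone Q {v}) P \<longleftrightarrow>
    p \<in> P \<and> (\<forall>y\<in>P. y - p \<in> tangent_cone Q {v})"
proof -
  have "tight_translate Q ((\<lambda>x. x + p) ` tangent_cone Q {v}) P \<longleftrightarrow>
      tightly_contains (tangent_cone Q {v}) p P"
  proof
    assume "tight_translate Q ((\<lambda>x. x + p) ` tangent_cone Q {v}) P"
    then obtain C w where C: "C \<in> dual_fan Q" "tightly_contains C w P"
      and eq: "(\<lambda>x. x + w) ` C = (\<lambda>x. x + p) ` tangent_cone Q {v}"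
      unfolding tight_translate_def by force
    then have "C = tangent_cone Q {v} \<and> w = p"
      using translate_eq_translate_vertex_cone_iff[OF Q v convex_cone_dual_fan[OF C(1)], of w p]
      by simp
    then show "tightly_contains (tangent_cone Q {v}) p P" using C(2) by simp
  qed (use tangent_cone_vertex_in_dual_fan[OF v] in \<open>auto simp: tight_translate_def\<close>)
  then show ?thesis
    using tightly_contains_pointed_iff lineal_tangent_cone_vertex[OF Q v] by blast
qed

definition cone_vertex :: "'a::euclidean_space set \<Rightarrow> 'a set \<Rightarrow> 'a" where
  "cone_vertex Q C = (SOME v. v extreme_point_of Q \<and>
      (\<exists>G. G face_of Q \<and> C = tangent_cone Q G \<and> v \<in> G))"

lemma cone_vertex_spec:
  fixes Q :: "'a::euclidean_space set"
  assumes Q: "polytope Q" and C: "C \<in> dual_fan Q"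
  shows "cone_vertex Q C extreme_point_of Q"
    and "tangent_cone Q {cone_vertex Q C} \<subseteq> C"
proof -
  obtain G where G: "G face_of Q" "G \<noteq> {}" "C = tangent_cone Q G"
    using C unfolding dual_fan_def by blast
  have "compact G" "convex G"
    using face_of_polytope_polytope[OF Q G(1)] polytope_imp_compact polytope_imp_convex by auto
  then obtain x where "x extreme_point_of G" using extreme_point_exists_convex G(2) by blast
  then have "x extreme_point_of Q" "x \<in> G" using extreme_point_of_face G(1) by blast+
  then have "\<exists>v. v extreme_point_of Q \<and> (\<exists>G. G face_of Q \<and> C = tangent_cone Q G \<and> v \<in> G)"
    using G by blast
  then have "cone_vertex Q C extreme_point_of Q \<and>
      (\<exists>G. G face_of Q \<and> C = tangent_cone Q G \<and> cone_vertex Q C \<in> G)"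
    unfolding cone_vertex_def by (rule someI_ex)
  then show "cone_vertex Q C extreme_point_of Q" "tangent_cone Q {cone_vertex Q C} \<subseteq> C"
    using tangent_cone_vertex_subset_face by blast+
qed

lemma cone_vertex_tangent_cone_vertex:
  fixes Q :: "'a::euclidean_space set"
  assumes Q: "polytope Q" and v: "v extreme_point_of Q"
  shows "cone_vertex Q (tangent_cone Q {v}) = v"
proof -
  let ?w = "cone_vertex Q (tangent_cone Q {v})"
  have w: "?w extreme_point_of Q" "tangent_cone Q {?w} \<subseteq> tangent_cone Q {v}"
    using cone_vertex_spec[OF Q tangent_cone_vertex_in_dual_fan[OF v]] by blast+
  have "v \<in> Q" "?w \<in> Q" using v w(1) extreme_point_of_def by blast+
  then have "v - ?w \<in> tangent_cone Q {v}" "- (v - ?w) \<in> tangent_cone Q {v}"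
    using w(2) diff_in_tangent_cone[of _ Q] by fastforce+
  then have "v - ?w \<in> lineal (tangent_cone Q {v})" using lineal_iff by blast
  then show ?thesis using lineal_tangent_cone_vertex[OF Q v] by simp
qed

definition vertex_translate_of :: "'a::euclidean_space set \<Rightarrow> 'a set \<Rightarrow> 'a set \<Rightarrow> bool" where
  "vertex_translate_of Q T S \<longleftrightarrow> (\<exists>C p. C \<in> dual_fan Q \<and>
      T = (\<lambda>x. x + p) ` tangent_cone Q {cone_vertex Q C} \<and> S = (\<lambda>x. x + p) ` C)"

definition cone_embedding :: "'a::euclidean_space set \<Rightarrow> 'a set \<Rightarrow> ('a set \<Rightarrow> int) \<Rightarrow> 'a set \<Rightarrow> int"
  where "cone_embedding Q W f = (\<lambda>S. if S \<in> tran_dual_fan Q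
      then \<Sum>T\<in>{T\<in>X_set Q W. vertex_translate_of Q T S}. f T else 0)"

lemma vertex_translate_of_translateD:
  assumes C: "C \<in> dual_fan Q" and T: "vertex_translate_of Q T ((\<lambda>x. x + a) ` C)"
  shows "\<exists>p. T = (\<lambda>x. x + p) ` tangent_cone Q {cone_vertex Q C} \<and>
    (\<lambda>x. x + a) ` C = (\<lambda>x. x + p) ` C"
proof -
  obtain C' p where C': "C' \<in> dual_fan Q" "T = (\<lambda>x. x + p) ` tangent_cone Q {cone_vertex Q C'}"
    and eq: "(\<lambda>x. x + a) ` C = (\<lambda>x. x + p) ` C'"
    using T unfolding vertex_translate_of_def by auto
  have "C' = C"
    using eq translates_convex_cone_eq_iff[OF convex_cone_dual_fan[OF C] convex_cone_dual_fan[OF C'(1)]]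
    by blast
  then show ?thesis using C' eq by blast
qed

lemma vertex_translate_of_X_setD:
  fixes Q :: "'a::euclidean_space set"
  assumes Q: "polytope Q" and T: "T \<in> X_set Q W" and R: "vertex_translate_of Q T S"
  shows "\<exists>C w. C \<in> dual_fan Q \<and> w \<in> W \<and> S = (\<lambda>x. x + w) ` C"
proof -
  obtain C p where C: "C \<in> dual_fan Q" "S = (\<lambda>x. x + p) ` C"
    and Tp: "T = (\<lambda>x. x + p) ` tangent_cone Q {cone_vertex Q C}"
    using R unfolding vertex_translate_of_def by blast
  obtain v w where v: "v extreme_point_of Q" and w: "w \<in> W"
    and Tw: "T = (\<lambda>x. x + w) ` tangent_cone Q {v}"
    using T unfolding X_set_def min_dual_fan_def by blast
  have "(\<lambda>x. x + p) ` tangent_cone Q {cone_vertex Q C} = (\<lambda>x. x + w) ` tangent_cone Q {v}"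
    using Tp Tw by simp
  then have "p = w"
    using translate_eq_translate_vertex_cone_iff[OF Q v convex_cone_tangent_cone] by blast
  then show ?thesis using C w by blast
qed

lemma finite_X_set:
  fixes Q :: "'a::euclidean_space set"
  assumes Q: "polytope Q" and W: "finite W"
  shows "finite (X_set Q W)"
proof -
  have "X_set Q W \<subseteq> (\<lambda>(v, w). (\<lambda>x. x + w) ` tangent_cone Q {v}) ` ({v. v extreme_point_of Q} \<times> W)"
    unfolding X_set_def min_dual_fan_def by auto
  moreover have "finite {v. v extreme_point_of Q}"
    using finite_polyhedron_extreme_points polytope_imp_polyhedron Q by blast
  ultimately show ?thesis using W finite_subset by blast
qed

lemma finite_dual_fan:
  fixes Q :: "'a::euclidean_space set"
  assumes "polytope Q"
  shows "finite (dual_fan Q)"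
proof -
  have "dual_fan Q \<subseteq> tangent_cone Q ` {F. F face_of Q}"
    unfolding dual_fan_def by auto
  then show ?thesis using finite_polytope_faces[OF assms] finite_subset by blast
qed

lemma cone_embedding_X_set:
  fixes Q :: "'a::euclidean_space set"
  assumes Q: "polytope Q" and T0: "T0 \<in> X_set Q W"
  shows "cone_embedding Q W f T0 = f T0"
proof -
  obtain v w where v: "v extreme_point_of Q" and T0w: "T0 = (\<lambda>x. x + w) ` tangent_cone Q {v}"
    using T0 unfolding X_set_def min_dual_fan_def by blast
  have tc: "tangent_cone Q {v} \<in> dual_fan Q" using tangent_cone_vertex_in_dual_fan[OF v] .
  then have "T0 \<in> tran_dual_fan Q" unfolding tran_dual_fan_def T0w by blast
  moreover have "vertex_translate_of Q T T0 \<longleftrightarrow> T = T0" for T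
  proof
    assume "vertex_translate_of Q T T0"
    then show "T = T0"
      using vertex_translate_of_translateD[OF tc] cone_vertex_tangent_cone_vertex[OF Q v]
      unfolding T0w by fastforce
  next
    assume "T = T0"
    then show "vertex_translate_of Q T T0"
      unfolding vertex_translate_of_def T0w using tc cone_vertex_tangent_cone_vertex[OF Q v]
      by (intro exI[of _ "tangent_cone Q {v}"] exI[of _ w]) simp
  qed
  then have "{T\<in>X_set Q W. vertex_translate_of Q T T0} = {T0}" using T0 by blast
  ultimately show ?thesis unfolding cone_embedding_def by simp
qed

lemma tight_vertex_translate_unique:
  fixes Q :: "'a::euclidean_space set"
  assumes Q: "polytope Q" and C: "C \<in> dual_fan Q"
    and T1: "vertex_translate_of Q T1 ((\<lambda>x. x + a) ` C)" "tight_translate Q T1 P"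
    and T2: "vertex_translate_of Q T2 ((\<lambda>x. x + a) ` C)" "tight_translate Q T2 P"
  shows "T1 = T2"
proof -
  let ?v = "cone_vertex Q C"
  have v: "?v extreme_point_of Q" using cone_vertex_spec(1)[OF Q C] .
  obtain p1 where p1: "T1 = (\<lambda>x. x + p1) ` tangent_cone Q {?v}"
    using vertex_translate_of_translateD[OF C T1(1)] by blast
  obtain p2 where p2: "T2 = (\<lambda>x. x + p2) ` tangent_cone Q {?v}"
    using vertex_translate_of_translateD[OF C T2(1)] by blast
  have "p1 = p2"
    using T1(2) T2(2) apex_unique[OF Q v]
    unfolding p1 p2 tight_translate_vertex_cone_iff[OF Q v] by blast
  then show ?thesis using p1 p2 by simp
qed

lemma tight_vertex_translate_exists_iff:
  fixes Q :: "'a::euclidean_space set"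
  assumes Q: "polytope Q" and P: "P \<in> deformations_restr Q W" and C: "C \<in> dual_fan Q"
  shows "(\<exists>T\<in>X_set Q W. vertex_translate_of Q T ((\<lambda>x. x + a) ` C) \<and> tight_translate Q T P)
    \<longleftrightarrow> tight_translate Q ((\<lambda>x. x + a) ` C) P"
proof -
  let ?v = "cone_vertex Q C"
  have v: "?v extreme_point_of Q" and vC: "tangent_cone Q {?v} \<subseteq> C"
    using cone_vertex_spec[OF Q C] by blast+
  have cone: "convex_cone C" using convex_cone_dual_fan[OF C] .
  have PD: "P \<in> deformations Q" "vertices P \<subseteq> W"
    using P unfolding deformations_restr_def by auto
  show ?thesis
  proof
    assume "\<exists>T\<in>X_set Q W. vertex_translate_of Q T ((\<lambda>x. x + a) ` C) \<and> tight_translate Q T P"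
    then obtain T where T: "vertex_translate_of Q T ((\<lambda>x. x + a) ` C)" "tight_translate Q T P"
      by blast
    then obtain p where p: "(\<lambda>x. x + a) ` C = (\<lambda>x. x + p) ` C"
      and "T = (\<lambda>x. x + p) ` tangent_cone Q {?v}"
      using vertex_translate_of_translateD[OF C] by blast
    then have "tight_translate Q ((\<lambda>x. x + p) ` tangent_cone Q {?v}) P" using T(2) by simp
    then have "p \<in> P" "\<forall>y\<in>P. y - p \<in> tangent_cone Q {?v}"
      unfolding tight_translate_vertex_cone_iff[OF Q v] by simp_all
    then have "p \<in> P" "\<forall>y\<in>P. y - p \<in> C" using vC by blast+
    then have "tightly_contains C p P" using tightly_contains_if_apex[OF cone] by blast
    then show "tight_translate Q ((\<lambda>x. x + a) ` C) P"
      unfolding tight_translate_def using C p by blast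
  next
    assume "tight_translate Q ((\<lambda>x. x + a) ` C) P"
    then obtain C' w where C': "C' \<in> dual_fan Q" "tightly_contains C' w P"
      and eq: "(\<lambda>x. x + a) ` C = (\<lambda>x. x + w) ` C'"
      unfolding tight_translate_def by blast
    have "C' = C"
      using eq translates_convex_cone_eq_iff[OF cone convex_cone_dual_fan[OF C'(1)]] by blast
    obtain p where p: "p \<in> P" "\<forall>y\<in>P. y - p \<in> tangent_cone Q {?v}"
      using deformation_apex[OF Q PD(1) v] by blast
    then have "\<forall>y\<in>P. y - p \<in> C" using vC by blast
    then have "(\<lambda>x. x + w) ` C = (\<lambda>x. x + p) ` C"
      using tightly_contains_translate_eq[OF cone _ p(1)] C'(2) \<open>C' = C\<close> by blast
    then have "(\<lambda>x. x + a) ` C = (\<lambda>x. x + p) ` C" using eq \<open>C' = C\<close> by simp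
    then have R: "vertex_translate_of Q ((\<lambda>x. x + p) ` tangent_cone Q {?v}) ((\<lambda>x. x + a) ` C)"
      unfolding vertex_translate_of_def using C by blast
    have "convex P"
      using PD(1) polyhedron_imp_convex unfolding deformations_def ext_deformations_def by blast
    then have "p \<in> W"
      using apex_extreme_point[OF Q v _ p] PD(2) unfolding vertices_def by blast
    then have "(\<lambda>x. x + p) ` tangent_cone Q {?v} \<in> X_set Q W"
      unfolding X_set_def min_dual_fan_def using v by blast
    moreover have "tight_translate Q ((\<lambda>x. x + p) ` tangent_cone Q {?v}) P"
      unfolding tight_translate_vertex_cone_iff[OF Q v] using p by blast
    ultimately show "\<exists>T\<in>X_set Q W. vertex_translate_of Q T ((\<lambda>x. x + a) ` C) \<and> tight_translate Q T P"
      using R by blast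
  qed
qed

lemma cone_embedding_FW_gen:
  fixes Q :: "'a::euclidean_space set"
  assumes Q: "polytope Q" and W: "finite W" and P: "P \<in> deformations_restr Q W"
  shows "cone_embedding Q W (FW_gen Q W P) = F_gen Q P"
proof
  fix S
  show "cone_embedding Q W (FW_gen Q W P) S = F_gen Q P S"
  proof (cases "S \<in> tran_dual_fan Q")
    case False
    then show ?thesis unfolding cone_embedding_def F_gen_def by simp
  next
    case True
    then obtain C a where C: "C \<in> dual_fan Q" and S: "S = (\<lambda>x. x + a) ` C"
      unfolding tran_dual_fan_def by blast
    define B where "B = {T\<in>X_set Q W. vertex_translate_of Q T S \<and> tight_translate Q T P}"
    have "cone_embedding Q W (FW_gen Q W P) S
        = (\<Sum>T\<in>{T\<in>X_set Q W. vertex_translate_of Q T S}. if tight_translate Q T P then 1 else 0)"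
      using True unfolding cone_embedding_def FW_gen_def by (auto intro!: sum.cong)
    also have "\<dots> = int (card B)"
      unfolding B_def using finite_X_set[OF Q W]
      by (subst sum.inter_filter[symmetric]) auto
    finally have sum: "cone_embedding Q W (FW_gen Q W P) S = int (card B)" .
    have "T1 = T2" if "T1 \<in> B" "T2 \<in> B" for T1 T2
    proof (rule tight_vertex_translate_unique[OF Q C])
      show "vertex_translate_of Q T1 ((\<lambda>x. x + a) ` C)" "tight_translate Q T1 P"
        "vertex_translate_of Q T2 ((\<lambda>x. x + a) ` C)" "tight_translate Q T2 P"
        using that by (simp_all add: B_def S)
    qed
    then have "B = {} \<or> (\<exists>T. B = {T})" by blast
    moreover have "B \<noteq> {} \<longleftrightarrow> tight_translate Q S P"
      using tight_vertex_translate_exists_iff[OF Q P C, of a] unfolding B_def S by auto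
    ultimately show ?thesis using sum True by (auto simp: F_gen_def)
  qed
qed

lemma cone_embedding_in_int_fin_funs_on:
  fixes Q :: "'a::euclidean_space set"
  assumes Q: "polytope Q" and W: "finite W"
  shows "cone_embedding Q W f \<in> int_fin_funs_on (tran_dual_fan Q)"
proof -
  have "{S. cone_embedding Q W f S \<noteq> 0} \<subseteq> (\<lambda>(C, w). (\<lambda>x. x + w) ` C) ` (dual_fan Q \<times> W)"
  proof
    fix S assume "S \<in> {S. cone_embedding Q W f S \<noteq> 0}"
    then have "(\<Sum>T\<in>{T\<in>X_set Q W. vertex_translate_of Q T S}. f T) \<noteq> 0"
      unfolding cone_embedding_def by (auto split: if_splits)
    then have "{T\<in>X_set Q W. vertex_translate_of Q T S} \<noteq> {}" by force
    then obtain C w where "C \<in> dual_fan Q" "w \<in> W" "S = (\<lambda>x. x + w) ` C"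
      using vertex_translate_of_X_setD[OF Q] by blast
    then show "S \<in> (\<lambda>(C, w). (\<lambda>x. x + w) ` C) ` (dual_fan Q \<times> W)" by force
  qed
  then have "finite {S. cone_embedding Q W f S \<noteq> 0}"
    using finite_dual_fan[OF Q] W finite_subset by blast
  then show ?thesis unfolding int_fin_funs_on_def cone_embedding_def by simp
qed

lemma cone_embedding_add:
  "cone_embedding Q W (\<lambda>S. f S + g S) = (\<lambda>S. cone_embedding Q W f S + cone_embedding Q W g S)"
  unfolding cone_embedding_def by (auto simp: sum.distrib)

lemma cone_embedding_scale:
  "cone_embedding Q W (\<lambda>S. c * f S) = (\<lambda>S. c * cone_embedding Q W f S)"
  unfolding cone_embedding_def by (auto simp: sum_distrib_left)

lemma inj_on_cone_embedding:
  fixes Q :: "'a::euclidean_space set"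
  assumes Q: "polytope Q"
  shows "inj_on (cone_embedding Q W) (int_funs_on (X_set Q W))"
proof (rule inj_onI, rule ext)
  fix f g S assume "f \<in> int_funs_on (X_set Q W)" "g \<in> int_funs_on (X_set Q W)"
    and "cone_embedding Q W f = cone_embedding Q W g"
  then show "f S = g S"
    using cone_embedding_X_set[OF Q, of S W f] cone_embedding_X_set[OF Q, of S W g]
    unfolding int_funs_on_def by (cases "S \<in> X_set Q W") simp_all
qed

theorem proposition2p9:
  fixes Q :: "'a::euclidean_space set" and W :: "'a set"
  assumes "polytope Q" and "Q \<noteq> {}"
    and "\<exists>D \<in> deformations Q. W = vertices D"
  shows "\<exists>E :: ('a set \<Rightarrow> int) \<Rightarrow> ('a set \<Rightarrow> int).
     (\<forall>f \<in> int_funs_on (X_set Q W). E f \<in> int_fin_funs_on (tran_dual_fan Q)) \<and>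
     (\<forall>f \<in> int_funs_on (X_set Q W). \<forall>g \<in> int_funs_on (X_set Q W).
        E (\<lambda>S. f S + g S) = (\<lambda>S. E f S + E g S)) \<and>
     (\<forall>f \<in> int_funs_on (X_set Q W). \<forall>c::int. E (\<lambda>S. c * f S) = (\<lambda>S. c * E f S)) \<and>
     inj_on E (int_funs_on (X_set Q W)) \<and>
     (\<forall>P \<in> deformations_restr Q W. E (FW_gen Q W P) = F_gen Q P)"
proof -
  obtain D where D: "D \<in> deformations Q" "W = vertices D" using assms(3) by blast
  then have "polyhedron D" by (simp add: deformations_def ext_deformations_def)
  then have W: "finite W" using D(2) finite_polyhedron_extreme_points by (simp add: vertices_def)
  show ?thesis
    by (intro exI[of _ "cone_embedding Q W"] conjI ballI allI)
      (simp_all add: cone_embedding_in_int_fin_funs_on[OF assms(1) W] cone_embedding_add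
        cone_embedding_scale inj_on_cone_embedding[OF assms(1)] cone_embedding_FW_gen[OF assms(1) W])
qed

end
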